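(* Let $X$ be a transitive BE-algebra, $k\in(-1,0]$, and $(X,f)$ an $([e],[e]\vee[c_k])$-ideal of $X$ such that $f(1)>\tfrac{-k-1}{2}$. Then $(X,f)$ is an $N$-ideal of $X$.
   Context: A BE-algebra is a set $X$ with a binary operation $*$ and a distinguished element $1$ such that for all $x,y,z\in X$: $x*x=1$, $x*1=1$, $1*x=x$, and $x*(y*z)=y*(x*z)$. Write $x\le y$ iff $x*y=1$. A BE-algebra is transitive if $y*z\le(x*y)*(x*z)$ for all $x,y,z\in X$. An ideal of $X$ is a nonempty subset $I\subseteq X$ such that $x*s\in I$ for all $x\in X$, $s\in I$, and $(s*(q*x))*x\in I$ for all $x\in X$ and $s,q\in I$. An $N$-structure on $X$ is a pair $(X,f)$ where $f:X\to[-1,0]$ is any function. For $t\in[-1,0]$ let $C(f;t)=\{x\in X: f(x)\le t\}$. The $N$-structure $(X,f)$ is an $N$-ideal of $X$ if for every $t\in[-1,0]$ the set $C(f;t)$ is either empty or an ideal of $X$. Fix $k\in(-1,0]$. For $x\in X$ and $t\in[-1,0)$, write $\frac{x}{t}[e]f$ if $f(x)\le t$, and $\frac{x}{t}[c_k]f$ if $f(x)+t+k+1<0$; write $\frac{x}{t}([e]\vee[c_k])f$ if at least one of these holds. The $N$-structure $(X,f)$ is an $([e],[e]\vee[c_k])$-ideal of $X$ if for all $x,y,z\in X$ and all $t,r\in[-1,0)$: (i) $f(y)\le t$ implies $\frac{x*y}{t}([e]\vee[c_k])f$; (ii) $f(x)\le t$ and $f(y)\le r$ together imply $\frac{(x*(y*z))*z}{\max\{t,r\}}([e]\vee[c_k])f$.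 *)

theory Defs
  imports Complex_Main
begin

definition BE_algebra :: "('a \<Rightarrow> 'a \<Rightarrow> 'a) \<Rightarrow> 'a \<Rightarrow> bool" where
  "BE_algebra star one \<longleftrightarrow>
     (\<forall>x. star x x = one) \<and> (\<forall>x. star x one = one) \<and> (\<forall>x. star one x = x) \<and>
     (\<forall>x y z. star x (star y z) = star y (star x z))"

definition BE_le :: "('a \<Rightarrow> 'a \<Rightarrow> 'a) \<Rightarrow> 'a \<Rightarrow> 'a \<Rightarrow> 'a \<Rightarrow> bool" where
  "BE_le star one x y \<longleftrightarrow> star x y = one"

definition BE_transitive :: "('a \<Rightarrow> 'a \<Rightarrow> 'a) \<Rightarrow> 'a \<Rightarrow> bool" where
  "BE_transitive star one \<longleftrightarrow>
     (\<forall>x y z. BE_le star one (star y z) (star (star x y) (star x z)))"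

definition BE_ideal :: "('a \<Rightarrow> 'a \<Rightarrow> 'a) \<Rightarrow> 'a set \<Rightarrow> bool" where
  "BE_ideal star I \<longleftrightarrow> I \<noteq> {} \<and>
     (\<forall>x. \<forall>s\<in>I. star x s \<in> I) \<and>
     (\<forall>x. \<forall>s\<in>I. \<forall>q\<in>I. star (star s (star q x)) x \<in> I)"

definition N_structure :: "('a \<Rightarrow> real) \<Rightarrow> bool" where
  "N_structure f \<longleftrightarrow> (\<forall>x. f x \<in> {-1..0})"

definition Ccut :: "('a \<Rightarrow> real) \<Rightarrow> real \<Rightarrow> 'a set" where
  "Ccut f t = {x. f x \<le> t}"

definition N_ideal :: "('a \<Rightarrow> 'a \<Rightarrow> 'a) \<Rightarrow> ('a \<Rightarrow> real) \<Rightarrow> bool" where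
  "N_ideal star f \<longleftrightarrow> N_structure f \<and>
     (\<forall>t\<in>{-1..0}. Ccut f t = {} \<or> BE_ideal star (Ccut f t))"

definition pt_e :: "('a \<Rightarrow> real) \<Rightarrow> 'a \<Rightarrow> real \<Rightarrow> bool" where
  "pt_e f x t \<longleftrightarrow> f x \<le> t"

definition pt_ck :: "real \<Rightarrow> ('a \<Rightarrow> real) \<Rightarrow> 'a \<Rightarrow> real \<Rightarrow> bool" where
  "pt_ck k f x t \<longleftrightarrow> f x + t + k + 1 < 0"

definition pt_e_or_ck :: "real \<Rightarrow> ('a \<Rightarrow> real) \<Rightarrow> 'a \<Rightarrow> real \<Rightarrow> bool" where
  "pt_e_or_ck k f x t \<longleftrightarrow> pt_e f x t \<or> pt_ck k f x t"

definition e_eck_ideal :: "('a \<Rightarrow> 'a \<Rightarrow> 'a) \<Rightarrow> real \<Rightarrow> ('a \<Rightarrow> real) \<Rightarrow> bool" where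
  "e_eck_ideal star k f \<longleftrightarrow> N_structure f \<and>
     (\<forall>x y z. \<forall>t\<in>{-1..<0}. \<forall>r\<in>{-1..<0}.
        (f y \<le> t \<longrightarrow> pt_e_or_ck k f (star x y) t) \<and>
        (f x \<le> t \<and> f y \<le> r \<longrightarrow> pt_e_or_ck k f (star (star x (star y z)) z) (max t r)))"

end

theory Submission
  imports Defs
begin

text \<open>If a value \<open>a > (-k-1)/2\<close> is \<open>[e]\<or>[c_k]\<close>-related to every level \<open>t' \<ge> t\<close>, then already
  \<open>a \<le> t\<close>: otherwise the level \<open>t' = max t (-a-k-1)\<close> defeats both alternatives.
  Hence in an \<open>([e],[e]\<or>[c_k])\<close>-ideal whose values all exceed \<open>(-k-1)/2\<close>, the weak
  alternative \<open>[c_k]\<close> never matters and the level cuts are ideals. All values do exceed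
  it, because \<open>f 1 = f (y * y)\<close> is bounded by \<open>f y\<close> in this way.\<close>

lemma le_if_e_or_ck_above:
  fixes k t a :: real
  assumes "k > -1" and "t \<in> {-1..<0}" and "a > (- k - 1) / 2"
    and "\<And>t'. t' \<in> {-1..<0} \<Longrightarrow> t \<le> t' \<Longrightarrow> a \<le> t' \<or> a + t' + k + 1 < 0"
  shows "a \<le> t"
proof (rule ccontr)
  assume "\<not> a \<le> t"
  define t' where "t' = max t (- a - k - 1)"
  have "t' \<in> {-1..<0}" and "t \<le> t'"
    using assms(1-3) \<open>\<not> a \<le> t\<close> by (auto simp: t'_def)
  then have "a \<le> t' \<or> a + t' + k + 1 < 0"
    using assms(4) by blast
  moreover have "t' < a" and "a + t' + k + 1 \<ge> 0"
    using assms(1-3) \<open>\<not> a \<le> t\<close> by (auto simp: t'_def)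
  ultimately show False by linarith
qed

lemma le_if_e_or_ck_above_value:
  fixes k a b :: real
  assumes "k > -1" and "b \<in> {-1..0}" and "a \<le> 0" and "a > (- k - 1) / 2"
    and "\<And>t'. t' \<in> {-1..<0} \<Longrightarrow> b \<le> t' \<Longrightarrow> a \<le> t' \<or> a + t' + k + 1 < 0"
  shows "a \<le> b"
proof (cases "b = 0")
  case False
  then show ?thesis
    using le_if_e_or_ck_above[of k b a] assms by auto
qed (use assms(3) in simp)

lemma e_eck_ideal_values_in_range:
  "e_eck_ideal star k f \<Longrightarrow> f x \<in> {-1..0}"
  by (simp add: e_eck_ideal_def N_structure_def)

lemma e_eck_ideal_star_le_right:
  assumes "e_eck_ideal star k f" and "k > -1" and "f (star x y) > (- k - 1) / 2"
  shows "f (star x y) \<le> f y"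
proof (rule le_if_e_or_ck_above_value[OF assms(2) _ _ assms(3)])
  fix t' assume "t' \<in> {-1..<0}" "f y \<le> t'"
  then show "f (star x y) \<le> t' \<or> f (star x y) + t' + k + 1 < 0"
    using assms(1) by (auto simp: e_eck_ideal_def pt_e_or_ck_def pt_e_def pt_ck_def)
qed (use e_eck_ideal_values_in_range[OF assms(1)] in auto)

lemma e_eck_ideal_star_le_max:
  assumes "e_eck_ideal star k f" and "k > -1"
    and "f (star (star x (star y z)) z) > (- k - 1) / 2"
  shows "f (star (star x (star y z)) z) \<le> max (f x) (f y)"
proof (rule le_if_e_or_ck_above_value[OF assms(2) _ _ assms(3)])
  fix t' assume "t' \<in> {-1..<0}" "max (f x) (f y) \<le> t'"
  then have "pt_e_or_ck k f (star (star x (star y z)) z) (max t' t')"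
    using assms(1) unfolding e_eck_ideal_def by (meson max.boundedE)
  then show "f (star (star x (star y z)) z) \<le> t'
      \<or> f (star (star x (star y z)) z) + t' + k + 1 < 0"
    by (simp add: pt_e_or_ck_def pt_e_def pt_ck_def)
qed (use e_eck_ideal_values_in_range[OF assms(1)] in \<open>auto simp: le_max_iff_disj\<close>)

lemma e_eck_ideal_one_le:
  assumes "BE_algebra star one" and "e_eck_ideal star k f" and "k > -1"
    and "f one > (- k - 1) / 2"
  shows "f one \<le> f y"
proof -
  have "star y y = one"
    using assms(1) by (simp add: BE_algebra_def)
  then show ?thesis
    using e_eck_ideal_star_le_right[OF assms(2,3), of y y] assms(4) by simp
qed

lemma N_ideal_if_star_le:
  assumes "N_structure f"
    and star_right: "\<And>x y. f (star x y) \<le> f y"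
    and star_max: "\<And>x y z. f (star (star x (star y z)) z) \<le> max (f x) (f y)"
  shows "N_ideal star f"
  unfolding N_ideal_def
proof (intro conjI ballI assms(1))
  fix t :: real
  have "star x s \<in> Ccut f t" if "s \<in> Ccut f t" for x s
    using star_right[of x s] that by (simp add: Ccut_def)
  moreover have "star (star s (star q x)) x \<in> Ccut f t"
    if "s \<in> Ccut f t" "q \<in> Ccut f t" for x s q
    using star_max[of s q x] that by (simp add: Ccut_def)
  ultimately show "Ccut f t = {} \<or> BE_ideal star (Ccut f t)"
    by (auto simp: BE_ideal_def)
qed

theorem mainTheorem10:
  fixes star :: "'a \<Rightarrow> 'a \<Rightarrow> 'a" and one :: 'a and f :: "'a \<Rightarrow> real" and k :: real
  assumes "BE_algebra star one"
    and "BE_transitive star one"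
    and "k \<in> {-1<..0}"
    and "e_eck_ideal star k f"
    and "f one > (- k - 1) / 2"
  shows "N_ideal star f"
proof -
  have k: "k > -1"
    using assms(3) by simp
  have above: "f w > (- k - 1) / 2" for w
    using assms(5) e_eck_ideal_one_le[OF assms(1,4) k assms(5)] by (rule less_le_trans)
  show ?thesis
  proof (rule N_ideal_if_star_le)
    show "N_structure f"
      using assms(4) by (simp add: e_eck_ideal_def)
    show "f (star x y) \<le> f y" for x y
      using e_eck_ideal_star_le_right[OF assms(4) k above] .
    show "f (star (star x (star y z)) z) \<le> max (f x) (f y)" for x y z
      using e_eck_ideal_star_le_max[OF assms(4) k above] .
  qed
qed

end
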